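(* Let $h:\mathbb{R}^n\to(-\infty,+\infty]$ be a proper lower semicontinuous convex function whose domain $\mathrm{dom}\,h$ is closed and bounded, let $\Omega\subseteq\mathbb{R}^n$ be a closed convex set with $\mathrm{dom}\,h\subseteq\Omega$, and let $D_h := \sup_{u_1,u_2\in\mathrm{dom}\,h}\|u_1-u_2\|$. Let $A_0=12$, $a_{k-1} = \frac{1+\sqrt{1+4A_{k-1}}}{2}$ and $A_k = A_{k-1}+a_{k-1}$ for $k\ge1$. Let $\lambda_0>0$ and $\bar\xi\ge 0$. Let $\{y_k\}_{k\ge0}\subseteq \mathrm{dom}\,h$, let $\{\lambda_k\}_{k\ge1}$ satisfy $0<\lambda_k\le\lambda_0$, let $\{\xi_k\}_{k\ge1}$ satisfy $0\le\xi_k\le\bar\xi$, and set $\tau_k = 2\xi_k\lambda_k/a_{k-1}$ for $k\ge1$. Let $x_0 = y_0$ and, for $k\ge1$, $$x_k = P_\Omega\!\left(\frac{(1+\tau_k)A_k}{a_{k-1}(\tau_k a_{k-1}+1)}\,y_k - \frac{A_{k-1}}{a_{k-1}(\tau_k a_{k-1}+1)}\,y_{k-1}\right),$$ where $P_\Omega$ denotes the Euclidean projection onto $\Omega$. Then for every $k\ge 0$, $$\|x_k - x_0\| \le C k, \qquad C := 2(2+\bar\xi\lambda_0)D_h.$$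
   Context: $\|\cdot\|$ is the Euclidean norm on $\mathbb{R}^n$. $\mathrm{dom}\,h=\{u: h(u)<+\infty\}$. *)

theory Defs
  imports "HOL-Analysis.Analysis"
begin

definition edom :: "('a \<Rightarrow> ereal) \<Rightarrow> 'a set" where
  "edom h = {u. h u < \<infinity>}"

definition proper_fun :: "('a \<Rightarrow> ereal) \<Rightarrow> bool" where
  "proper_fun h \<longleftrightarrow> (\<forall>u. h u \<noteq> -\<infinity>) \<and> edom h \<noteq> {}"

definition lsc_fun :: "('a::topological_space \<Rightarrow> ereal) \<Rightarrow> bool" where
  "lsc_fun h \<longleftrightarrow> (\<forall>x. \<forall>c. c < h x \<longrightarrow> (\<forall>\<^sub>F y in at x. c < h y))"

definition econvex_fun :: "('a::real_vector \<Rightarrow> ereal) \<Rightarrow> bool" where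
  "econvex_fun h \<longleftrightarrow> (\<forall>x y. \<forall>t::real. 0 < t \<and> t < 1 \<longrightarrow>
      h (t *\<^sub>R x + (1 - t) *\<^sub>R y) \<le> ereal t * h x + ereal (1 - t) * h y)"

fun Aseq :: "nat \<Rightarrow> real" where
  "Aseq 0 = 12"
| "Aseq (Suc k) = Aseq k + (1 + sqrt (1 + 4 * Aseq k)) / 2"

definition aseq :: "nat \<Rightarrow> real" where
  "aseq k = (1 + sqrt (1 + 4 * Aseq k)) / 2"

end

theory Submission
  imports Defs
begin

text \<open>The update defining \<open>x\<^sub>k\<close> is the projection of the extrapolation
  \<open>(1 + c) y\<^sub>k - c y\<^sub>k\<^sub>-\<^sub>1\<close> with \<open>0 \<le> c \<le> a\<^sub>k\<^sub>-\<^sub>1 - 1\<close>; this uses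
  \<open>A\<^sub>k = a\<^sub>k\<^sub>-\<^sub>1\<^sup>2\<close> and \<open>A\<^sub>k\<^sub>-\<^sub>1 = a\<^sub>k\<^sub>-\<^sub>1 (a\<^sub>k\<^sub>-\<^sub>1 - 1)\<close>. Since projection onto \<open>\<Omega>\<close> is
  nonexpansive and fixes \<open>x\<^sub>0 = y\<^sub>0\<close>, the distance \<open>\<parallel>x\<^sub>k - x\<^sub>0\<parallel>\<close> is at most
  \<open>(1 + c) D\<^sub>h \<le> a\<^sub>k\<^sub>-\<^sub>1 D\<^sub>h\<close>, and \<open>a\<^sub>k\<^sub>-\<^sub>1 \<le> k + 3 \<le> 4k\<close> because \<open>a\<^sub>0 = 4\<close> and
  \<open>a\<^sub>k \<le> a\<^sub>k\<^sub>-\<^sub>1 + 1\<close>. Only \<open>\<tau>\<^sub>k \<ge> 0\<close> matters, so the bound holds with constant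
  \<open>4 D\<^sub>h\<close>.\<close>

lemma Aseq_ge_12: "Aseq k \<ge> 12"
proof (induction k)
  case (Suc k)
  have "(1 + sqrt (1 + 4 * Aseq k)) / 2 \<ge> 0"
    using Suc.IH by simp
  with Suc.IH show ?case
    unfolding Aseq.simps by linarith
qed simp

lemma aseq_ge_1: "aseq k \<ge> 1"
  using Aseq_ge_12[of k] by (simp add: aseq_def)

lemma Aseq_eq_aseq_times: "Aseq k = aseq k * (aseq k - 1)"
proof -
  have "(sqrt (1 + 4 * Aseq k))\<^sup>2 = 1 + 4 * Aseq k"
    using Aseq_ge_12[of k] by simp
  thus ?thesis unfolding aseq_def by (simp add: power2_eq_square field_simps)
qed

lemma Aseq_Suc_eq_aseq_squared: "Aseq (Suc k) = (aseq k)\<^sup>2"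
  using Aseq_eq_aseq_times[of k] by (simp add: aseq_def power2_eq_square algebra_simps)

lemma aseq_Suc_le: "aseq (Suc k) \<le> aseq k + 1"
proof -
  let ?a = "aseq k"
  have "sqrt (1 + 4 * ?a\<^sup>2) \<le> sqrt ((1 + 2 * ?a)\<^sup>2)"
    using aseq_ge_1[of k] by (intro real_sqrt_le_mono) (simp add: power2_eq_square algebra_simps)
  also have "\<dots> = 1 + 2 * ?a"
    using aseq_ge_1[of k] by simp
  finally show ?thesis
    unfolding aseq_def[of "Suc k"] Aseq_Suc_eq_aseq_squared by simp
qed

lemma aseq_le: "aseq k \<le> real k + 4"
proof (induction k)
  case 0
  have "sqrt 49 = (7::real)"
    by (simp add: real_sqrt_unique)
  then show ?case
    by (simp add: aseq_def)
next
  case (Suc k)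
  then show ?case
    using aseq_Suc_le[of k] by simp
qed

lemma extrapolation_coefficient:
  fixes a \<tau> :: real
  assumes "a \<ge> 1" and "\<tau> \<ge> 0"
  defines "c \<equiv> (a - 1) / (\<tau> * a + 1)"
  shows "(1 + \<tau>) * a\<^sup>2 / (a * (\<tau> * a + 1)) = 1 + c"
    and "a * (a - 1) / (a * (\<tau> * a + 1)) = c"
    and "0 \<le> c" and "c \<le> a - 1"
proof -
  have den: "\<tau> * a + 1 \<ge> 1"
    using assms(1,2) by simp
  have "(1 + \<tau>) * a\<^sup>2 / (a * (\<tau> * a + 1)) = (1 + \<tau>) * a / (\<tau> * a + 1)"
    using assms(1) by (simp add: power2_eq_square)
  also have "\<dots> = 1 + c"
    using den unfolding c_def by (simp add: field_simps)
  finally show "(1 + \<tau>) * a\<^sup>2 / (a * (\<tau> * a + 1)) = 1 + c" .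
  show "a * (a - 1) / (a * (\<tau> * a + 1)) = c"
    using assms(1) unfolding c_def by simp
  show "0 \<le> c"
    using den assms(1) unfolding c_def by simp
  have "(a - 1) * 1 \<le> (a - 1) * (\<tau> * a + 1)"
    using den assms(1) by (intro mult_left_mono) auto
  thus "c \<le> a - 1"
    using den unfolding c_def by (simp add: divide_le_eq)
qed

lemma closest_point_extrapolation_dist_le:
  fixes \<Omega> :: "'a::euclidean_space set"
  assumes "convex \<Omega>" and "closed \<Omega>" and "w \<in> \<Omega>" and "c \<ge> 0"
    and "norm (u - w) \<le> D" and "norm (u - v) \<le> D"
  shows "norm (closest_point \<Omega> ((1 + c) *\<^sub>R u - c *\<^sub>R v) - w) \<le> (1 + c) * D"
proof -
  let ?z = "(1 + c) *\<^sub>R u - c *\<^sub>R v"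
  have "norm (closest_point \<Omega> ?z - w) = dist (closest_point \<Omega> ?z) (closest_point \<Omega> w)"
    using closest_point_self[OF assms(3)] by (simp add: dist_norm)
  also have "\<dots> \<le> dist ?z w"
    using closest_point_lipschitz[OF assms(1,2)] assms(3) by blast
  also have "\<dots> = norm ((u - w) + c *\<^sub>R (u - v))"
    by (simp add: dist_norm algebra_simps)
  also have "\<dots> \<le> norm (u - w) + c * norm (u - v)"
    using norm_triangle_ineq[of "u - w" "c *\<^sub>R (u - v)"] assms(4) by simp
  also have "\<dots> \<le> (1 + c) * D"
    using assms(4-6) mult_left_mono[OF assms(6) assms(4)] by (simp add: algebra_simps)
  finally show ?thesis .
qed

theorem lemma4p4:
  fixes h :: "real ^ 'n \<Rightarrow> ereal"
    and \<Omega> :: "(real ^ 'n) set"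
    and y x :: "nat \<Rightarrow> real ^ 'n"
    and lam \<xi> :: "nat \<Rightarrow> real"
    and lam0 \<xi>bar :: real
  assumes "proper_fun h" and "lsc_fun h" and "econvex_fun h"
    and "closed (edom h)" and "bounded (edom h)"
    and "closed \<Omega>" and "convex \<Omega>" and "edom h \<subseteq> \<Omega>"
    and "lam0 > 0" and "\<xi>bar \<ge> 0"
    and "\<And>k. y k \<in> edom h"
    and "\<And>k. k \<ge> 1 \<Longrightarrow> 0 < lam k \<and> lam k \<le> lam0"
    and "\<And>k. k \<ge> 1 \<Longrightarrow> 0 \<le> \<xi> k \<and> \<xi> k \<le> \<xi>bar"
    and "x 0 = y 0"
    and "\<And>k. k \<ge> 1 \<Longrightarrow>
          (let \<tau> = 2 * \<xi> k * lam k / aseq (k - 1) in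
           x k = closest_point \<Omega>
             (((1 + \<tau>) * Aseq k / (aseq (k - 1) * (\<tau> * aseq (k - 1) + 1))) *\<^sub>R y k
              - (Aseq (k - 1) / (aseq (k - 1) * (\<tau> * aseq (k - 1) + 1))) *\<^sub>R y (k - 1)))"
  shows "\<forall>k. norm (x k - x 0) \<le> 2 * (2 + \<xi>bar * lam0) * diameter (edom h) * real k"
proof (intro allI)
  fix k
  define D where "D = diameter (edom h)"
  have "D \<ge> 0"
    unfolding D_def using assms(5) by (rule diameter_ge_0)
  have dist_y: "norm (y i - y j) \<le> D" for i j
    using diameter_bounded_bound[OF assms(5) assms(11)[of i] assms(11)[of j]]
    by (simp add: D_def dist_norm)
  show "norm (x k - x 0) \<le> 2 * (2 + \<xi>bar * lam0) * diameter (edom h) * real k"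
  proof (cases k)
    case (Suc m)
    define a where "a = aseq m"
    define \<tau> where "\<tau> = 2 * \<xi> k * lam k / a"
    define c where "c = (a - 1) / (\<tau> * a + 1)"
    have "a \<ge> 1" and "\<tau> \<ge> 0"
      using aseq_ge_1[of m] assms(12,13)[of k] Suc by (simp_all add: a_def \<tau>_def)
    note coeff = extrapolation_coefficient[OF this, folded c_def]
    have "k \<ge> 1" and k_pred: "k - 1 = m"
      and A_k: "Aseq k = a\<^sup>2" and A_m: "Aseq m = a * (a - 1)"
      using Suc Aseq_Suc_eq_aseq_squared[of m] Aseq_eq_aseq_times[of m] by (simp_all add: a_def)
    have "x k = closest_point \<Omega> ((1 + c) *\<^sub>R y k - c *\<^sub>R y m)"
      using assms(15)[OF \<open>k \<ge> 1\<close>]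
      unfolding Let_def k_pred A_k A_m a_def[symmetric] \<tau>_def[symmetric] coeff(1,2) .
    moreover have "y 0 \<in> \<Omega>"
      using assms(8,11) by blast
    ultimately have "norm (x k - x 0) \<le> (1 + c) * D"
      using closest_point_extrapolation_dist_le[OF assms(7,6) _ coeff(3) dist_y[of k 0] dist_y[of k m]]
        assms(14) by simp
    also have "\<dots> \<le> (real m + 4) * D"
      using coeff(4) aseq_le[of m] \<open>D \<ge> 0\<close> unfolding a_def by (intro mult_right_mono) auto
    also have "\<dots> \<le> (4 * real k) * D"
      using Suc \<open>D \<ge> 0\<close> by (intro mult_right_mono) auto
    also have "\<dots> \<le> (2 * (2 + \<xi>bar * lam0) * real k) * D"
      using assms(9,10) \<open>D \<ge> 0\<close> by (intro mult_right_mono) auto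
    finally show ?thesis
      by (simp add: D_def mult_ac)
  qed simp
qed

end
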